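(* Let $\mathbf{c}\in\mathbb{R}^2$, let $\mathbf{e}_\pm$ be unit vectors with $\mathbf{e}_+\cdot\mathbf{e}_-=\cos(2\theta)$, $2\theta\in(0,2\pi)$, let $\Gamma:=\{\mathbf{c}+t\mathbf{e}_+:t\ge0\}\cup\{\mathbf{c}+t\mathbf{e}_-:t\ge0\}$, and let $\chi_{\mathrm{D}}\in\mathscr{C}^\infty(\mathbb{R}^2)$ be radially symmetric about $\mathbf{c}$, i.e. $\chi_{\mathrm{D}}(\mathbf{x})=\rho(|\mathbf{x}-\mathbf{c}|)$ for a smooth compactly supported radial profile $\rho$. Then there exists a cutoff function $\chi\in\mathscr{C}^\infty_{c}(\mathbb{R}_+)$, depending only on $\chi_{\mathrm{D}}$, such that for all $p,\tilde p,q,\tilde q\in\mathscr{C}^\infty_0(\mathbb{R}_+)$, $$\langle\mathscr{A}_\Gamma\,\chi_{\mathrm{D}}\Theta_\Gamma(p,\tilde p),\chi_{\mathrm{D}}\Theta_\Gamma(q,\tilde q)\rangle_\Gamma=\langle\mathscr{A}^+_\theta(\chi p),\chi q\rangle_{\mathbb{R}_+}+\langle\mathscr{A}^-_\theta(\chi\tilde p),\chi\tilde q\rangle_{\mathbb{R}_+}.$$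
   Context: $\mathscr{C}^\infty_0(\mathbb{R}_+)$: smooth functions on $[0,\infty)$ with bounded support contained in $(0,\infty)$; $\mathscr{C}^\infty_c(\mathbb{R}_+)$: restrictions to $\mathbb{R}_+$ of smooth functions on $\mathbb{R}$ with bounded support. $\Theta_\Gamma(p,\tilde p)(\mathbf{c}+t\mathbf{e}_\pm):=(p(t)\pm\tilde p(t))/\sqrt2$ for $t>0$. $\langle\mathscr{A}_\Gamma(u),v\rangle_\Gamma:=\int_{\Gamma\times\Gamma}u(\mathbf{y})v(\mathbf{x})|\mathbf{x}-\mathbf{y}|^{-1/2}\,d\mathbf{x}\,d\mathbf{y}$ (arc length). For $\alpha\in[0,2\pi)$, $\mathfrak{K}_\alpha(\tau):=(4\sin^2\alpha+(\sqrt\tau-1/\sqrt\tau)^2)^{-1/4}$, and $\langle\mathscr{A}^\pm_\theta(p),q\rangle_{\mathbb{R}_+}:=\int_{\mathbb{R}_+\times\mathbb{R}_+}(\mathfrak{K}_0(t/s)\pm\mathfrak{K}_\theta(t/s))p(s)q(t)(st)^{-1/4}\,ds\,dt$. *)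

theory Defs
  imports "HOL-Analysis.Analysis"
begin

coinductive C_inf :: "('a::real_normed_vector \<Rightarrow> real) \<Rightarrow> bool" where
  "(\<forall>x. f differentiable (at x)) \<Longrightarrow>
   (\<forall>v. C_inf (\<lambda>x. frechet_derivative f (at x) v)) \<Longrightarrow> C_inf f"

text \<open>Represented as functions on the whole real line that vanish outside a compact
  interval [a,b] with 0 < a (i.e. extended by zero to the left).\<close>
definition C0_inf_Rplus :: "(real \<Rightarrow> real) \<Rightarrow> bool" where
  "C0_inf_Rplus p \<longleftrightarrow> C_inf p \<and> (\<exists>a b. 0 < a \<and> (\<forall>t. p t \<noteq> 0 \<longrightarrow> a \<le> t \<and> t \<le> b))"

text \<open>C_c^infinity(R_+): restrictions to R_+ of smooth functions on R with bounded support.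
  Represented by the smooth function on R itself (only its values on t > 0 are used).\<close>
definition Cc_inf_Rplus :: "(real \<Rightarrow> real) \<Rightarrow> bool" where
  "Cc_inf_Rplus chi \<longleftrightarrow> C_inf chi \<and> bounded {t. chi t \<noteq> 0}"

definition ray_measure :: "real^2 \<Rightarrow> real^2 \<Rightarrow> (real^2) measure" where
  "ray_measure c e = distr (restrict_space lborel {0..}) borel (\<lambda>t. c + t *\<^sub>R e)"

text \<open>Arc-length measure on Gamma = union of the two rays (they meet only in c).\<close>
definition Gamma_measure :: "real^2 \<Rightarrow> real^2 \<Rightarrow> real^2 \<Rightarrow> (real^2) measure" where
  "Gamma_measure c ep em = measure_of UNIV (sets borel)
     (\<lambda>A. emeasure (ray_measure c ep) A + emeasure (ray_measure c em) A)"

definition A_Gamma_pair ::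
  "real^2 \<Rightarrow> real^2 \<Rightarrow> real^2 \<Rightarrow> (real^2 \<Rightarrow> real) \<Rightarrow> (real^2 \<Rightarrow> real) \<Rightarrow> real" where
  "A_Gamma_pair c ep em u v =
     (\<integral>z. u (snd z) * v (fst z) * norm (fst z - snd z) powr (-1/2)
        \<partial>(Gamma_measure c ep em \<Otimes>\<^sub>M Gamma_measure c ep em))"

text \<open>Theta_Gamma(p, pt)(c + t e_pm) = (p t \<plusminus> pt t)/sqrt 2 for t > 0 (value 0 elsewhere,
  which is irrelevant for the integrals).\<close>
definition Theta_Gamma ::
  "real^2 \<Rightarrow> real^2 \<Rightarrow> real^2 \<Rightarrow> (real \<Rightarrow> real) \<Rightarrow> (real \<Rightarrow> real) \<Rightarrow> real^2 \<Rightarrow> real" where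
  "Theta_Gamma c ep em p pt x =
     (if x \<noteq> c \<and> x = c + norm (x - c) *\<^sub>R ep then (p (norm (x - c)) + pt (norm (x - c))) / sqrt 2
      else if x \<noteq> c \<and> x = c + norm (x - c) *\<^sub>R em then (p (norm (x - c)) - pt (norm (x - c))) / sqrt 2
      else 0)"

definition frakK :: "real \<Rightarrow> real \<Rightarrow> real" where
  "frakK \<alpha> \<tau> = (4 * (sin \<alpha>)\<^sup>2 + (sqrt \<tau> - 1 / sqrt \<tau>)\<^sup>2) powr (-1/4)"

definition A_plus_pair :: "real \<Rightarrow> (real \<Rightarrow> real) \<Rightarrow> (real \<Rightarrow> real) \<Rightarrow> real" where
  "A_plus_pair \<theta> p q =
     (LINT z : {0<..} \<times> {0<..} | lborel.
        (frakK 0 (snd z / fst z) + frakK \<theta> (snd z / fst z)) * p (fst z) * q (snd z)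
          * (fst z * snd z) powr (-1/4))"

definition A_minus_pair :: "real \<Rightarrow> (real \<Rightarrow> real) \<Rightarrow> (real \<Rightarrow> real) \<Rightarrow> real" where
  "A_minus_pair \<theta> p q =
     (LINT z : {0<..} \<times> {0<..} | lborel.
        (frakK 0 (snd z / fst z) - frakK \<theta> (snd z / fst z)) * p (fst z) * q (snd z)
          * (fst z * snd z) powr (-1/4))"

end

theory Submission
  imports Defs
begin

(* Parametrise Gamma by the whole real line, t maps to c + |t| e_(sign t): arc length on Gamma
   becomes Lebesgue measure, and the double integral over Gamma x Gamma becomes an integral over
   the plane, which we fold onto the open quadrant (0,oo)^2.  On the quadrant with signs (a, b) the
   kernel |x - y|^(-1/2) equals (s t)^(-1/4) K_alpha(t/s), with alpha = 0 when both points lie on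
   the same ray and alpha = theta otherwise, while Theta_Gamma contributes (p + a pt)/sqrt 2 and
   (q + b qt)/sqrt 2.  Summing over the four sign patterns diagonalises the form into the
   A^+ part in (p, q) and the A^- part in (pt, qt).  The radial cutoff chi_D only multiplies the
   densities on the rays, so chi can be taken to be its radial profile; only continuity of that
   profile is used, not the smoothness of chi_D. *)

lemma C_inf_continuous_on: "C_inf f \<Longrightarrow> continuous_on UNIV f"
  by (erule C_inf.cases)
    (auto intro!: continuous_at_imp_continuous_on differentiable_imp_continuous_within)

definition compactly_supported_continuous :: "(real \<Rightarrow> real) \<Rightarrow> bool" where
  "compactly_supported_continuous f \<longleftrightarrow> continuous_on UNIV f \<and> bounded {t. f t \<noteq> 0}"

lemma C0_inf_Rplus_compactly_supported_continuous:
  assumes "C0_inf_Rplus p"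
  shows "compactly_supported_continuous p"
proof -
  obtain a b where "\<And>t. p t \<noteq> 0 \<Longrightarrow> a \<le> t \<and> t \<le> b"
    using assms unfolding C0_inf_Rplus_def by blast
  then have "bounded {t. p t \<noteq> 0}"
    by (intro bounded_subset[OF bounded_closed_interval[of a b]]) auto
  with assms show ?thesis
    by (simp add: compactly_supported_continuous_def C0_inf_Rplus_def C_inf_continuous_on)
qed

lemma compactly_supported_continuous_mult_left:
  assumes "continuous_on UNIV g" "compactly_supported_continuous f"
  shows "compactly_supported_continuous (\<lambda>t. g t * f t)"
proof -
  have "{t. g t * f t \<noteq> 0} \<subseteq> {t. f t \<noteq> 0}"
    by auto
  then have "bounded {t. g t * f t \<noteq> 0}"
    using assms(2) bounded_subset unfolding compactly_supported_continuous_def by blast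
  with assms show ?thesis
    unfolding compactly_supported_continuous_def by (auto intro!: continuous_intros)
qed

lemma compactly_supported_continuous_lincomb:
  assumes "compactly_supported_continuous f" "compactly_supported_continuous g"
  shows "compactly_supported_continuous (\<lambda>t. (f t + a * g t) / b)"
proof -
  have "{t. (f t + a * g t) / b \<noteq> 0} \<subseteq> {t. f t \<noteq> 0} \<union> {t. g t \<noteq> 0}"
    by auto
  then have "bounded {t. (f t + a * g t) / b \<noteq> 0}"
    using assms bounded_Un bounded_subset unfolding compactly_supported_continuous_def by blast
  moreover have "continuous_on UNIV (\<lambda>t. (f t + a * g t) / b)"
    using assms unfolding compactly_supported_continuous_def
    by (cases "b = 0") (auto intro!: continuous_intros)
  ultimately show ?thesis
    unfolding compactly_supported_continuous_def by blast
qed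

lemma compactly_supported_continuous_bounded:
  assumes "compactly_supported_continuous f"
  obtains B where "\<And>x. \<bar>f x\<bar> \<le> B"
proof -
  have "compact (f ` closure {x. f x \<noteq> 0})"
    using assms unfolding compactly_supported_continuous_def
    by (intro compact_continuous_image) (auto intro: continuous_on_subset)
  then obtain B where B: "\<And>y. y \<in> f ` closure {x. f x \<noteq> 0} \<Longrightarrow> \<bar>y\<bar> \<le> B"
    by (metis bounded_iff compact_imp_bounded real_norm_def)
  have "\<bar>f x\<bar> \<le> max B 0" for x
    using B[of "f x"] closure_subset[of "{x. f x \<noteq> 0}"] by (cases "f x = 0") auto
  with that show ?thesis .
qed

definition half_line_kernel :: "real \<Rightarrow> real \<Rightarrow> real \<Rightarrow> real" where
  "half_line_kernel \<alpha> s t = (s * t) powr (-1/4) * frakK \<alpha> (t / s)"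

lemma half_line_kernel_nonneg: "0 \<le> half_line_kernel \<alpha> s t"
  by (simp add: half_line_kernel_def frakK_def)

lemma half_line_kernel_eq:
  assumes "0 < s" "0 < t"
  shows "half_line_kernel \<alpha> s t = (s\<^sup>2 + t\<^sup>2 - 2 * s * t * cos (2 * \<alpha>)) powr (-1/4)"
proof -
  have "4 * (sin \<alpha>)\<^sup>2 + (sqrt (t / s) - 1 / sqrt (t / s))\<^sup>2
      = (s\<^sup>2 + t\<^sup>2 - 2 * s * t * cos (2 * \<alpha>)) / (s * t)"
    unfolding cos_double_sin
    using assms by (simp add: real_sqrt_divide field_simps power2_eq_square)
  moreover have "0 \<le> s\<^sup>2 + t\<^sup>2 - 2 * s * t * cos (2 * \<alpha>)"
  proof -
    have "s * t * cos (2 * \<alpha>) \<le> s * t"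
      using assms by (simp add: mult_left_le)
    then show ?thesis
      using zero_le_power2[of "s - t"] by (simp add: power2_diff)
  qed
  ultimately show ?thesis
    using assms by (simp add: half_line_kernel_def frakK_def powr_divide)
qed

lemma power2_powr_neg_quarter:
  fixes x :: real
  assumes "0 \<le> x"
  shows "(x\<^sup>2) powr (-1/4) = x powr (-1/2)"
proof -
  have "x\<^sup>2 = x powr 2"
    using assms by (cases "x = 0") (simp_all add: powr_numeral)
  then show ?thesis
    by (simp add: powr_powr)
qed

lemma norm_diff_scaleR_powr:
  fixes e e' :: "'a::real_inner"
  assumes "norm e = 1" "norm e' = 1" "e \<bullet> e' = cos (2 * \<alpha>)" "0 < s" "0 < t"
  shows "norm (t *\<^sub>R e' - s *\<^sub>R e) powr (-1/2) = half_line_kernel \<alpha> s t"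
proof -
  have "(norm (t *\<^sub>R e' - s *\<^sub>R e))\<^sup>2 = s\<^sup>2 + t\<^sup>2 - 2 * s * t * cos (2 * \<alpha>)"
    using assms unfolding power2_norm_eq_inner
    by (simp add: inner_diff_left inner_diff_right inner_commute[of e' e] norm_eq_1
        power2_eq_square algebra_simps)
  then show ?thesis
    using half_line_kernel_eq[OF assms(4,5)] power2_powr_neg_quarter[OF norm_ge_zero] by metis
qed

lemma half_line_kernel_0:
  assumes "0 < s" "0 < t"
  shows "half_line_kernel 0 s t = \<bar>t - s\<bar> powr (-1/2)"
  using norm_diff_scaleR_powr[of "1::real" 1 0 s t] assms by simp

(* s \<noteq> t is needed: on the diagonal K_0 takes the junk value 0 powr (-1/4) = 0. *)
lemma half_line_kernel_le_0:
  assumes "0 < s" "0 < t" "s \<noteq> t"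
  shows "half_line_kernel \<alpha> s t \<le> half_line_kernel 0 s t"
proof -
  have "s * t * cos (2 * \<alpha>) \<le> s * t"
    using assms by (simp add: mult_left_le)
  moreover have "0 < (s - t)\<^sup>2"
    using assms by simp
  ultimately show ?thesis
    using assms unfolding half_line_kernel_eq[OF assms(1,2)]
    by (intro powr_mono2') (auto simp: power2_diff)
qed

lemma abs_mult_half_line_kernel_le:
  assumes "0 < x" "0 < y" "x \<noteq> y" "\<bar>u\<bar> \<le> B" "\<bar>v\<bar> \<le> B'"
  shows "\<bar>u * v\<bar> * half_line_kernel \<alpha> x y \<le> B * B' * \<bar>x - y\<bar> powr (-1/2)"
proof -
  have "\<bar>u * v\<bar> \<le> B * B'"
    unfolding abs_mult using assms(4,5) by (intro mult_mono) auto
  moreover have "half_line_kernel \<alpha> x y \<le> \<bar>x - y\<bar> powr (-1/2)"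
    using half_line_kernel_le_0[OF assms(1-3)] half_line_kernel_0[OF assms(1,2)]
    by (simp add: abs_minus_commute)
  ultimately show ?thesis
    by (intro mult_mono) (auto simp: half_line_kernel_nonneg)
qed

lemma borel_measurable_half_line_kernel[measurable]:
  assumes [measurable]: "f \<in> borel_measurable M" "g \<in> borel_measurable M"
  shows "(\<lambda>z. half_line_kernel \<alpha> (f z) (g z)) \<in> borel_measurable M"
  unfolding half_line_kernel_def frakK_def by measurable

lemma AE_lborel_pair_fst_ne_snd: "AE z in lborel \<Otimes>\<^sub>M lborel. fst z \<noteq> (snd z :: real)"
proof (rule lborel_pair.AE_pair_measure)
  have "AE x in lborel. AE y in lborel. (x::real) \<noteq> y"
  proof (rule AE_I2)
    fix x :: real
    show "AE y in lborel. x \<noteq> y"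
      using AE_lborel_singleton[of x] by eventually_elim auto
  qed
  then show "AE x in lborel. AE y in lborel. fst (x::real, y) \<noteq> snd (x, y)"
    by simp
qed measurable

lemma AE_lborel_pair_off_axes: "AE z in lborel \<Otimes>\<^sub>M lborel. fst z \<noteq> (0::real) \<and> snd z \<noteq> (0::real)"
proof (rule lborel_pair.AE_pair_measure)
  show "AE x in lborel. AE y in lborel. fst (x::real, y::real) \<noteq> 0 \<and> snd (x, y) \<noteq> 0"
    using AE_lborel_singleton[of 0] by eventually_elim (simp add: AE_lborel_singleton)
qed measurable

lemma nn_integral_abs_powr_neg_half_finite:
  fixes L :: real
  assumes "0 \<le> L"
  shows "(\<integral>\<^sup>+y. ennreal (indicator {-L..L} y * \<bar>y\<bar> powr (-1/2)) \<partial>lborel) < \<infinity>"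
proof -
  define f where "f y = ennreal (y powr (-1/2)) * indicator {0..L} y" for y :: real
  have [measurable]: "f \<in> borel_measurable borel"
    unfolding f_def by measurable
  have f_finite: "integral\<^sup>N lborel f = ennreal (L powr (1/2) / (1/2))"
    unfolding f_def
    by (rule nn_integral_has_integral_lebesgue') (use has_integral_powr_from_0[of "-1/2" L] assms in auto)
  have f_reflect: "(\<integral>\<^sup>+y. f (- y) \<partial>lborel) = integral\<^sup>N lborel f"
    using nn_integral_real_affine[of f "-1" 0] by simp
  have "(\<integral>\<^sup>+y. ennreal (indicator {-L..L} y * \<bar>y\<bar> powr (-1/2)) \<partial>lborel)
      \<le> (\<integral>\<^sup>+y. f y + f (- y) \<partial>lborel)"
    by (intro nn_integral_mono) (auto simp: f_def indicator_def)
  also have "\<dots> = integral\<^sup>N lborel f + (\<integral>\<^sup>+y. f (- y) \<partial>lborel)"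
    by (intro nn_integral_add) auto
  also have "\<dots> < \<infinity>"
    using f_finite f_reflect by (simp flip: ennreal_plus)
  finally show ?thesis .
qed

lemma integrable_abs_diff_powr_neg_half_box:
  fixes a b :: real
  assumes "a \<le> b"
  shows "integrable (lborel \<Otimes>\<^sub>M lborel)
    (\<lambda>z. indicator ({a..b} \<times> {a..b}) z * \<bar>fst z - snd z\<bar> powr (-1/2))"
proof (subst integrable_iff_bounded, intro conjI)
  show "(\<lambda>z. indicator ({a..b} \<times> {a..b}) z * \<bar>fst z - snd z\<bar> powr (-1/2))
      \<in> borel_measurable (lborel \<Otimes>\<^sub>M lborel)"
    by measurable
  define g where "g y = ennreal (indicator {a-b..b-a} y * \<bar>y\<bar> powr (-1/2))" for y :: real
  have [measurable]: "g \<in> borel_measurable borel"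
    unfolding g_def by measurable
  define C where "C = integral\<^sup>N lborel g"
  have "C < \<infinity>"
    unfolding C_def g_def using nn_integral_abs_powr_neg_half_finite[of "b - a"] assms by simp
  have inner: "(\<integral>\<^sup>+y. ennreal (norm (indicator ({a..b} \<times> {a..b}) (x, y) * \<bar>x - y\<bar> powr (-1/2))) \<partial>lborel)
      \<le> indicator {a..b} x * C" for x
  proof -
    have "(\<integral>\<^sup>+y. ennreal (norm (indicator ({a..b} \<times> {a..b}) (x, y) * \<bar>x - y\<bar> powr (-1/2))) \<partial>lborel)
        \<le> (\<integral>\<^sup>+y. indicator {a..b} x * g (y - x) \<partial>lborel)"
      by (intro nn_integral_mono) (auto simp: g_def indicator_def abs_minus_commute)
    also have "\<dots> = indicator {a..b} x * (\<integral>\<^sup>+y. g (y - x) \<partial>lborel)"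
      by (intro nn_integral_cmult) measurable
    also have "(\<integral>\<^sup>+y. g (y - x) \<partial>lborel) = C"
      unfolding C_def using nn_integral_real_affine[of "\<lambda>y. g (y - x)" 1 x] by simp
    finally show ?thesis .
  qed
  have "(\<integral>\<^sup>+z. ennreal (norm (indicator ({a..b} \<times> {a..b}) z * \<bar>fst z - snd z\<bar> powr (-1/2))) \<partial>(lborel \<Otimes>\<^sub>M lborel))
      = (\<integral>\<^sup>+x. \<integral>\<^sup>+y. ennreal (norm (indicator ({a..b} \<times> {a..b}) (x, y) * \<bar>x - y\<bar> powr (-1/2))) \<partial>lborel \<partial>lborel)"
    by (subst lborel.nn_integral_fst[symmetric]) (auto simp: case_prod_beta)
  also have "\<dots> \<le> (\<integral>\<^sup>+x. indicator {a..b} x * C \<partial>lborel)"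
    by (intro nn_integral_mono inner)
  also have "\<dots> = C * emeasure lborel {a..b}"
    by (subst nn_integral_cmult_indicator[symmetric]) (auto simp: mult.commute)
  also have "\<dots> < \<infinity>"
    using \<open>C < \<infinity>\<close> assms by (simp add: ennreal_mult_less_top)
  finally show "(\<integral>\<^sup>+z. ennreal (norm (indicator ({a..b} \<times> {a..b}) z * \<bar>fst z - snd z\<bar> powr (-1/2))) \<partial>(lborel \<Otimes>\<^sub>M lborel)) < \<infinity>" .
qed

lemma integrable_half_line_kernel:
  fixes f g :: "real \<Rightarrow> real"
  assumes f: "compactly_supported_continuous f" and g: "compactly_supported_continuous g"
  shows "integrable (lborel \<Otimes>\<^sub>M lborel) (\<lambda>z. indicator ({0<..} \<times> {0<..}) z
           * f (fst z) * g (snd z) * half_line_kernel \<alpha> (fst z) (snd z))"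
proof -
  obtain Bf where Bf: "\<And>t. \<bar>f t\<bar> \<le> Bf"
    using compactly_supported_continuous_bounded[OF f] by blast
  obtain Bg where Bg: "\<And>t. \<bar>g t\<bar> \<le> Bg"
    using compactly_supported_continuous_bounded[OF g] by blast
  have "bounded ({t. f t \<noteq> 0} \<union> {t. g t \<noteq> 0})"
    using f g by (simp add: compactly_supported_continuous_def)
  then obtain r where "0 < r" "\<forall>t \<in> {t. f t \<noteq> 0} \<union> {t. g t \<noteq> 0}. \<bar>t\<bar> \<le> r"
    unfolding bounded_pos real_norm_def by blast
  then have r: "\<And>t. f t \<noteq> 0 \<or> g t \<noteq> 0 \<Longrightarrow> t \<in> {-r..r}"
    by (metis (mono_tags) Un_iff abs_le_iff atLeastAtMost_iff mem_Collect_eq minus_le_iff)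
  have [measurable]: "f \<in> borel_measurable borel" "g \<in> borel_measurable borel"
    using f g by (auto simp: compactly_supported_continuous_def intro: borel_measurable_continuous_onI)
  have "0 \<le> Bf" "0 \<le> Bg"
    using Bf[of 0] Bg[of 0] by auto
  show ?thesis
  proof (rule Bochner_Integration.integrable_bound)
    show "integrable (lborel \<Otimes>\<^sub>M lborel)
        (\<lambda>z. Bf * Bg * (indicator ({-r..r} \<times> {-r..r}) z * \<bar>fst z - snd z\<bar> powr (-1/2)))"
      using \<open>0 < r\<close> by (intro integrable_mult_right integrable_abs_diff_powr_neg_half_box) auto
    show "AE z in lborel \<Otimes>\<^sub>M lborel.
        norm (indicator ({0<..} \<times> {0<..}) z * f (fst z) * g (snd z) * half_line_kernel \<alpha> (fst z) (snd z))
        \<le> norm (Bf * Bg * (indicator ({-r..r} \<times> {-r..r}) z * \<bar>fst z - snd z\<bar> powr (-1/2)))"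
      using AE_lborel_pair_fst_ne_snd
    proof eventually_elim
      case (elim z)
      obtain x y where z: "z = (x, y)"
        by (cases z)
      show ?case
      proof (cases "x > 0 \<and> y > 0 \<and> f x \<noteq> 0 \<and> g y \<noteq> 0")
        case True
        with elim r abs_mult_half_line_kernel_le[of x y "f x" Bf "g y" Bg \<alpha>] Bf Bg
        show ?thesis
          using \<open>0 \<le> Bf\<close> \<open>0 \<le> Bg\<close> by (auto simp: z abs_mult half_line_kernel_nonneg)
      qed (auto simp: z)
    qed
  qed measurable
qed

lemma lborel_distr_mult_unit:
  assumes "\<bar>a\<bar> = 1"
  shows "distr lborel lborel ((*) a) = (lborel :: real measure)"
proof -
  have "distr lborel lborel ((*) a) = distr lborel borel ((*) a)"
    by (rule distr_cong) auto
  also have "\<dots> = lborel"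
    using assms by (simp add: lborel_distr_mult density_1)
  finally show ?thesis .
qed

lemma lborel_pair_distr_mult_unit:
  assumes "\<bar>a\<bar> = 1" "\<bar>b\<bar> = 1"
  shows "distr (lborel \<Otimes>\<^sub>M lborel) (lborel \<Otimes>\<^sub>M lborel) (\<lambda>(x, y). (a * x, b * y))
    = (lborel \<Otimes>\<^sub>M lborel :: (real \<times> real) measure)"
  using pair_measure_distr[of "(*) a" lborel lborel "(*) b" lborel lborel]
  by (simp add: lborel_distr_mult_unit assms lborel.sigma_finite_measure_axioms)

lemma
  fixes f :: "real \<times> real \<Rightarrow> real"
  assumes "\<bar>a\<bar> = 1" "\<bar>b\<bar> = 1" and [measurable]: "f \<in> borel_measurable (lborel \<Otimes>\<^sub>M lborel)"
  shows integral_lborel_pair_mult_unit: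
      "(\<integral>z. f (a * fst z, b * snd z) \<partial>(lborel \<Otimes>\<^sub>M lborel)) = integral\<^sup>L (lborel \<Otimes>\<^sub>M lborel) f"
    and integrable_lborel_pair_mult_unit:
      "integrable (lborel \<Otimes>\<^sub>M lborel) (\<lambda>z. f (a * fst z, b * snd z))
         \<longleftrightarrow> integrable (lborel \<Otimes>\<^sub>M lborel) f"
proof -
  have "(\<lambda>(x, y). (a * x, b * y)) \<in> lborel \<Otimes>\<^sub>M lborel \<rightarrow>\<^sub>M lborel \<Otimes>\<^sub>M (lborel :: real measure)"
    by measurable
  then show "(\<integral>z. f (a * fst z, b * snd z) \<partial>(lborel \<Otimes>\<^sub>M lborel)) = integral\<^sup>L (lborel \<Otimes>\<^sub>M lborel) f"
    and "integrable (lborel \<Otimes>\<^sub>M lborel) (\<lambda>z. f (a * fst z, b * snd z))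
         \<longleftrightarrow> integrable (lborel \<Otimes>\<^sub>M lborel) f"
    using integral_distr[of "\<lambda>(x, y). (a * x, b * y)" "lborel \<Otimes>\<^sub>M lborel" "lborel \<Otimes>\<^sub>M lborel" f]
      integrable_distr_eq[of "\<lambda>(x, y). (a * x, b * y)" "lborel \<Otimes>\<^sub>M lborel" "lborel \<Otimes>\<^sub>M lborel" f]
      assms(3)
    by (simp_all add: lborel_pair_distr_mult_unit assms case_prod_beta)
qed

lemma integral_lborel_pair_fold_quadrants:
  fixes H :: "real \<times> real \<Rightarrow> real"
  assumes [measurable]: "H \<in> borel_measurable (lborel \<Otimes>\<^sub>M lborel)"
    and integrable: "\<And>a b. \<bar>a\<bar> = 1 \<Longrightarrow> \<bar>b\<bar> = 1 \<Longrightarrow> integrable (lborel \<Otimes>\<^sub>M lborel)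
      (\<lambda>z. indicator ({0<..} \<times> {0<..}) z * H (a * fst z, b * snd z))"
  shows "integral\<^sup>L (lborel \<Otimes>\<^sub>M lborel) H = (\<integral>z. indicator ({0<..} \<times> {0<..}) z *
    (\<Sum>(a, b) \<in> {-1, 1} \<times> {-1, 1}. H (a * fst z, b * snd z)) \<partial>(lborel \<Otimes>\<^sub>M lborel))"
proof -
  define S :: "(real \<times> real) set" where "S = {-1, 1} \<times> {-1, 1}"
  define k where "k ab z = indicator ({0<..} \<times> {0<..}) z * H (fst ab * fst z, snd ab * snd z)"
    for ab and z :: "real \<times> real"
  have S: "finite S" "\<And>ab. ab \<in> S \<Longrightarrow> \<bar>fst ab\<bar> = 1 \<and> \<bar>snd ab\<bar> = 1"
    by (auto simp: S_def)
  have k_measurable[measurable]: "k ab \<in> borel_measurable (lborel \<Otimes>\<^sub>M lborel)" for ab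
    unfolding k_def by measurable
  have k_integrable: "integrable (lborel \<Otimes>\<^sub>M lborel) (k ab)" if "ab \<in> S" for ab
    unfolding k_def using integrable S(2)[OF that] by simp
  have "AE z in lborel \<Otimes>\<^sub>M lborel. H z = (\<Sum>ab\<in>S. k ab (fst ab * fst z, snd ab * snd z))"
    using AE_lborel_pair_off_axes
  proof eventually_elim
    case (elim z)
    then show ?case
      by (cases z) (auto simp: S_def k_def indicator_def linorder_neq_iff zero_less_mult_iff)
  qed
  then have "integral\<^sup>L (lborel \<Otimes>\<^sub>M lborel) H
      = (\<integral>z. (\<Sum>ab\<in>S. k ab (fst ab * fst z, snd ab * snd z)) \<partial>(lborel \<Otimes>\<^sub>M lborel))"
    by (intro integral_cong_AE) auto
  also have "\<dots> = (\<Sum>ab\<in>S. \<integral>z. k ab (fst ab * fst z, snd ab * snd z) \<partial>(lborel \<Otimes>\<^sub>M lborel))"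
    using k_integrable S
    by (intro Bochner_Integration.integral_sum) (simp add: integrable_lborel_pair_mult_unit[OF _ _ k_measurable])
  also have "\<dots> = (\<Sum>ab\<in>S. integral\<^sup>L (lborel \<Otimes>\<^sub>M lborel) (k ab))"
    using S by (intro sum.cong refl integral_lborel_pair_mult_unit) auto
  also have "\<dots> = (\<integral>z. (\<Sum>ab\<in>S. k ab z) \<partial>(lborel \<Otimes>\<^sub>M lborel))"
    using k_integrable by (intro Bochner_Integration.integral_sum[symmetric])
  finally show ?thesis
    by (simp only: S_def k_def sum_distrib_left split_beta')
qed

definition Gamma_param :: "real^2 \<Rightarrow> real^2 \<Rightarrow> real^2 \<Rightarrow> real \<Rightarrow> real^2" where
  "Gamma_param c ep em s = c + \<bar>s\<bar> *\<^sub>R (if 0 \<le> s then ep else em)"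

lemma Gamma_param_measurable[measurable]: "Gamma_param c ep em \<in> borel_measurable borel"
  unfolding Gamma_param_def by measurable

lemma norm_Gamma_param_minus:
  "norm ep = 1 \<Longrightarrow> norm em = 1 \<Longrightarrow> norm (Gamma_param c ep em s - c) = \<bar>s\<bar>"
  by (simp add: Gamma_param_def)

lemma Gamma_param_mult_unit:
  assumes "\<bar>a\<bar> = 1" "0 < s"
  shows "Gamma_param c ep em (a * s) = c + s *\<^sub>R (if a = 1 then ep else em)"
proof -
  have "a = 1 \<or> a = -1"
    using assms(1) by linarith
  then show ?thesis
    using assms(2) by (auto simp: Gamma_param_def)
qed

lemma emeasure_ray_measure:
  assumes "A \<in> sets borel"
  shows "emeasure (ray_measure c e) A = emeasure lborel ((\<lambda>t. c + t *\<^sub>R e) -` A \<inter> {0..})"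
proof -
  have "(\<lambda>t::real. c + t *\<^sub>R e) \<in> restrict_space lborel {0..} \<rightarrow>\<^sub>M borel"
    by (intro measurable_restrict_space1) measurable
  then show ?thesis
    using assms unfolding ray_measure_def
    by (simp add: emeasure_distr emeasure_restrict_space space_restrict_space)
qed

lemma emeasure_distr_Gamma_param:
  assumes [measurable]: "A \<in> sets borel"
  shows "emeasure (distr lborel borel (Gamma_param c ep em)) A
    = emeasure (ray_measure c ep) A + emeasure (ray_measure c em) A"
proof -
  define rp where "rp = (\<lambda>t::real. c + t *\<^sub>R ep)"
  define rm where "rm = (\<lambda>t::real. c + t *\<^sub>R em)"
  have [measurable]: "rp \<in> borel_measurable borel" "rm \<in> borel_measurable borel"
    unfolding rp_def rm_def by measurable
  have "Gamma_param c ep em -` A = (rp -` A \<inter> {0..}) \<union> uminus -` (rm -` A \<inter> {0<..})"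
    by (auto simp: Gamma_param_def rp_def rm_def split: if_splits)
  then have "emeasure (distr lborel borel (Gamma_param c ep em)) A
      = emeasure lborel (rp -` A \<inter> {0..}) + emeasure lborel (uminus -` (rm -` A \<inter> {0<..}))"
    by (simp add: emeasure_distr plus_emeasure[symmetric] disjoint_iff)
  also have "emeasure lborel (uminus -` (rm -` A \<inter> {0<..})) = emeasure lborel (rm -` A \<inter> {0<..})"
    by (subst lborel_distr_uminus[symmetric]) (simp add: emeasure_distr)
  also have "\<dots> = emeasure lborel (rm -` A \<inter> {0..})"
    by (rule emeasure_eq_AE) (use AE_lborel_singleton[of 0] in \<open>auto elim!: eventually_mono\<close>)
  finally show ?thesis
    by (simp add: emeasure_ray_measure rp_def rm_def)
qed

lemma Gamma_measure_eq_distr: "Gamma_measure c ep em = distr lborel borel (Gamma_param c ep em)"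
proof -
  have "Gamma_measure c ep em = measure_of UNIV (sets borel) (emeasure (distr lborel borel (Gamma_param c ep em)))"
    unfolding Gamma_measure_def
    by (intro measure_of_eq) (auto simp: emeasure_distr_Gamma_param sets.sigma_sets_eq[of borel, simplified])
  then show ?thesis
    using measure_of_of_measure[of "distr lborel borel (Gamma_param c ep em)"] by simp
qed

lemma sigma_finite_Gamma_measure:
  assumes "norm ep = 1" "norm em = 1"
  shows "sigma_finite_measure (Gamma_measure c ep em)"
proof
  show "\<exists>A. countable A \<and> A \<subseteq> sets (Gamma_measure c ep em) \<and> \<Union> A = space (Gamma_measure c ep em)
      \<and> (\<forall>a\<in>A. emeasure (Gamma_measure c ep em) a \<noteq> \<infinity>)"
  proof (intro exI[of _ "range (\<lambda>n::nat. cball c (real n))"] conjI ballI)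
    show "\<Union> (range (\<lambda>n::nat. cball c (real n))) = space (Gamma_measure c ep em)"
      by (auto simp: Gamma_measure_eq_distr real_arch_simple dist_commute mem_cball)
  next
    fix B assume "B \<in> range (\<lambda>n::nat. cball c (real n))"
    then obtain n :: nat where B: "B = cball c (real n)"
      by auto
    have "emeasure (Gamma_measure c ep em) B = emeasure lborel (Gamma_param c ep em -` B)"
      by (simp add: Gamma_measure_eq_distr emeasure_distr B)
    also have "\<dots> \<le> emeasure lborel {- real n .. real n}"
      using norm_Gamma_param_minus[OF assms]
      by (intro emeasure_mono) (auto simp: B mem_cball dist_norm norm_minus_commute)
    finally show "emeasure (Gamma_measure c ep em) B \<noteq> \<infinity>"
      by (auto simp: top_unique)
  qed (auto simp: Gamma_measure_eq_distr)
qed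

definition Gamma_integrand ::
  "real^2 \<Rightarrow> real^2 \<Rightarrow> real^2 \<Rightarrow> (real^2 \<Rightarrow> real) \<Rightarrow> (real^2 \<Rightarrow> real) \<Rightarrow> real \<times> real \<Rightarrow> real" where
  "Gamma_integrand c ep em u v z = u (Gamma_param c ep em (fst z)) * v (Gamma_param c ep em (snd z))
    * norm (Gamma_param c ep em (snd z) - Gamma_param c ep em (fst z)) powr (-1/2)"

lemma Gamma_integrand_measurable[measurable]:
  assumes [measurable]: "u \<in> borel_measurable borel" "v \<in> borel_measurable borel"
  shows "Gamma_integrand c ep em u v \<in> borel_measurable (lborel \<Otimes>\<^sub>M lborel)"
  unfolding Gamma_integrand_def by measurable

lemma A_Gamma_pair_eq_integral_Gamma_integrand:
  assumes "norm ep = 1" "norm em = 1"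
    and [measurable]: "u \<in> borel_measurable borel" "v \<in> borel_measurable borel"
  shows "A_Gamma_pair c ep em u v = integral\<^sup>L (lborel \<Otimes>\<^sub>M lborel) (Gamma_integrand c ep em u v)"
proof -
  let ?\<phi> = "Gamma_param c ep em"
  have "Gamma_measure c ep em \<Otimes>\<^sub>M Gamma_measure c ep em
      = distr (lborel \<Otimes>\<^sub>M lborel) (borel \<Otimes>\<^sub>M borel) (\<lambda>(x, y). (?\<phi> x, ?\<phi> y))"
    unfolding Gamma_measure_eq_distr
    by (rule pair_measure_distr)
      (use sigma_finite_Gamma_measure[OF assms(1,2)] in \<open>auto simp: Gamma_measure_eq_distr\<close>)
  then have "A_Gamma_pair c ep em u v = (\<integral>z. u (?\<phi> (snd z)) * v (?\<phi> (fst z))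
      * norm (?\<phi> (fst z) - ?\<phi> (snd z)) powr (-1/2) \<partial>(lborel \<Otimes>\<^sub>M lborel))"
    unfolding A_Gamma_pair_def by (simp add: integral_distr case_prod_beta)
  also have "\<dots> = integral\<^sup>L (lborel \<Otimes>\<^sub>M lborel) (Gamma_integrand c ep em u v)"
    by (subst lborel_pair.integral_product_swap[symmetric])
      (auto simp: split_beta' Gamma_integrand_def[abs_def])
  finally show ?thesis .
qed

lemma Theta_Gamma_measurable[measurable]:
  assumes [measurable]: "p \<in> borel_measurable borel" "pt \<in> borel_measurable borel"
  shows "Theta_Gamma c ep em p pt \<in> borel_measurable borel"
  unfolding Theta_Gamma_def by measurable

lemma mult_Theta_Gamma:
  "\<rho> (norm (x - c)) * Theta_Gamma c ep em p pt x
    = Theta_Gamma c ep em (\<lambda>t. \<rho> t * p t) (\<lambda>t. \<rho> t * pt t) x"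
  by (simp add: Theta_Gamma_def field_simps)

lemma Theta_Gamma_Gamma_param:
  assumes "norm ep = 1" "norm em = 1" "ep \<noteq> em" "\<bar>a\<bar> = 1" "0 < s"
  shows "Theta_Gamma c ep em p pt (Gamma_param c ep em (a * s)) = (p s + a * pt s) / sqrt 2"
proof -
  have "a = 1 \<or> a = -1"
    using assms(4) by linarith
  moreover have "c + s *\<^sub>R em \<noteq> c + s *\<^sub>R ep"
    using assms(3,5) by simp
  ultimately show ?thesis
    using assms by (auto simp: Gamma_param_mult_unit Theta_Gamma_def)
qed

lemma norm_Gamma_param_diff_powr:
  assumes "norm ep = 1" "norm em = 1" "ep \<bullet> em = cos (2 * \<theta>)"
    and "\<bar>a\<bar> = 1" "\<bar>b\<bar> = 1" "0 < x" "0 < y"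
  shows "norm (Gamma_param c ep em (b * y) - Gamma_param c ep em (a * x)) powr (-1/2)
    = half_line_kernel (if a = b then 0 else \<theta>) x y"
proof -
  define e where "e a = (if a = 1 then ep else em)" for a :: real
  have "norm (e a) = 1" "norm (e b) = 1"
    using assms(1,2) by (simp_all add: e_def)
  moreover have "e a \<bullet> e b = cos (2 * (if a = b then 0 else \<theta>))"
  proof -
    have "a = 1 \<or> a = -1" "b = 1 \<or> b = -1"
      using assms(4,5) by linarith+
    then show ?thesis
      using assms(1-3) by (auto simp: e_def inner_commute norm_eq_1)
  qed
  ultimately show ?thesis
    using norm_diff_scaleR_powr[of "e a" "e b" _ x y] assms(4-7)
    by (simp add: Gamma_param_mult_unit e_def)
qed

lemma sum_sign_pairs_Theta:
  fixes p pt q qt :: real and K :: "real \<Rightarrow> real"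
  shows "(\<Sum>(a, b) \<in> {-1, 1} \<times> {-1, 1}. (p + a * pt) / sqrt 2 * ((q + b * qt) / sqrt 2)
      * K (if a = b then \<alpha> else \<beta>))
    = p * q * (K \<alpha> + K \<beta>) + pt * qt * (K \<alpha> - K \<beta>)"
proof -
  have half: "x / sqrt 2 * (y / sqrt 2) = x * y / 2" for x y :: real
    by simp
  show ?thesis
    by (simp add: half field_simps)
qed

lemma Gamma_integrand_Theta_Gamma_quadrant:
  assumes unit: "norm ep = 1" "norm em = 1" and angle: "ep \<bullet> em = cos (2 * \<theta>)" and "ep \<noteq> em"
    and "\<bar>a\<bar> = 1" "\<bar>b\<bar> = 1" "0 < x" "0 < y"
  shows "Gamma_integrand c ep em (Theta_Gamma c ep em p pt) (Theta_Gamma c ep em q qt) (a * x, b * y)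
    = (p x + a * pt x) / sqrt 2 * ((q y + b * qt y) / sqrt 2) * half_line_kernel (if a = b then 0 else \<theta>) x y"
  using assms Theta_Gamma_Gamma_param[OF unit \<open>ep \<noteq> em\<close>] norm_Gamma_param_diff_powr[OF unit angle]
  by (simp add: Gamma_integrand_def)

lemma sum_quadrants_Gamma_integrand_Theta_Gamma:
  assumes "norm ep = 1" "norm em = 1" "ep \<bullet> em = cos (2 * \<theta>)" "ep \<noteq> em" "0 < x" "0 < y"
  shows "(\<Sum>(a, b) \<in> {-1, 1} \<times> {-1, 1}.
      Gamma_integrand c ep em (Theta_Gamma c ep em p pt) (Theta_Gamma c ep em q qt) (a * x, b * y))
    = p x * q y * (half_line_kernel 0 x y + half_line_kernel \<theta> x y)
      + pt x * qt y * (half_line_kernel 0 x y - half_line_kernel \<theta> x y)"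
proof -
  have "(\<Sum>(a, b) \<in> {-1, 1} \<times> {-1, 1}.
      Gamma_integrand c ep em (Theta_Gamma c ep em p pt) (Theta_Gamma c ep em q qt) (a * x, b * y))
    = (\<Sum>(a, b) \<in> {-1, 1} \<times> {-1, 1}.
      (p x + a * pt x) / sqrt 2 * ((q y + b * qt y) / sqrt 2) * half_line_kernel (if a = b then 0 else \<theta>) x y)"
  proof (intro sum.cong refl)
    fix ab :: "real \<times> real"
    assume "ab \<in> {-1, 1} \<times> {-1, 1}"
    then obtain a b where "ab = (a, b)" "\<bar>a\<bar> = 1" "\<bar>b\<bar> = 1"
      by auto
    with assms show "(case ab of (a, b) \<Rightarrow>
        Gamma_integrand c ep em (Theta_Gamma c ep em p pt) (Theta_Gamma c ep em q qt) (a * x, b * y))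
      = (case ab of (a, b) \<Rightarrow>
        (p x + a * pt x) / sqrt 2 * ((q y + b * qt y) / sqrt 2) * half_line_kernel (if a = b then 0 else \<theta>) x y)"
      by (simp add: Gamma_integrand_Theta_Gamma_quadrant)
  qed
  also have "\<dots> = p x * q y * (half_line_kernel 0 x y + half_line_kernel \<theta> x y)
      + pt x * qt y * (half_line_kernel 0 x y - half_line_kernel \<theta> x y)"
    by (rule sum_sign_pairs_Theta[where K = "\<lambda>\<alpha>. half_line_kernel \<alpha> x y"])
  finally show ?thesis .
qed

lemma
  shows A_plus_pair_eq_integral: "A_plus_pair \<theta> p q = (\<integral>z. indicator ({0<..} \<times> {0<..}) z
      * p (fst z) * q (snd z) * (half_line_kernel 0 (fst z) (snd z) + half_line_kernel \<theta> (fst z) (snd z))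
      \<partial>(lborel \<Otimes>\<^sub>M lborel))"
    and A_minus_pair_eq_integral: "A_minus_pair \<theta> p q = (\<integral>z. indicator ({0<..} \<times> {0<..}) z
      * p (fst z) * q (snd z) * (half_line_kernel 0 (fst z) (snd z) - half_line_kernel \<theta> (fst z) (snd z))
      \<partial>(lborel \<Otimes>\<^sub>M lborel))"
  unfolding A_plus_pair_def A_minus_pair_def set_lebesgue_integral_def lborel_prod half_line_kernel_def
  by (simp_all add: algebra_simps)

lemma A_Gamma_pair_Theta_Gamma:
  assumes unit: "norm ep = 1" "norm em = 1" and angle: "ep \<bullet> em = cos (2 * \<theta>)" and "ep \<noteq> em"
    and p: "compactly_supported_continuous p" and pt: "compactly_supported_continuous pt"
    and q: "compactly_supported_continuous q" and qt: "compactly_supported_continuous qt"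
  shows "A_Gamma_pair c ep em (Theta_Gamma c ep em p pt) (Theta_Gamma c ep em q qt)
    = A_plus_pair \<theta> p q + A_minus_pair \<theta> pt qt"
proof -
  let ?Q = "{0<..} \<times> {0<..} :: (real \<times> real) set"
  define H where "H = Gamma_integrand c ep em (Theta_Gamma c ep em p pt) (Theta_Gamma c ep em q qt)"
  have [measurable]: "p \<in> borel_measurable borel" "pt \<in> borel_measurable borel"
      "q \<in> borel_measurable borel" "qt \<in> borel_measurable borel"
    using p pt q qt by (auto simp: compactly_supported_continuous_def intro: borel_measurable_continuous_onI)
  have H_measurable[measurable]: "H \<in> borel_measurable (lborel \<Otimes>\<^sub>M lborel)"
    unfolding H_def by measurable
  have "A_Gamma_pair c ep em (Theta_Gamma c ep em p pt) (Theta_Gamma c ep em q qt)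
      = integral\<^sup>L (lborel \<Otimes>\<^sub>M lborel) H"
    unfolding H_def by (rule A_Gamma_pair_eq_integral_Gamma_integrand[OF unit]) measurable
  also have "\<dots> = (\<integral>z. indicator ?Q z
      * (\<Sum>(a, b) \<in> {-1, 1} \<times> {-1, 1}. H (a * fst z, b * snd z)) \<partial>(lborel \<Otimes>\<^sub>M lborel))"
  proof (rule integral_lborel_pair_fold_quadrants[OF H_measurable])
    fix a b :: real
    assume "\<bar>a\<bar> = 1" "\<bar>b\<bar> = 1"
    then have "(\<lambda>z. indicator ?Q z * H (a * fst z, b * snd z))
        = (\<lambda>z. indicator ?Q z * ((p (fst z) + a * pt (fst z)) / sqrt 2) * ((q (snd z) + b * qt (snd z)) / sqrt 2)
          * half_line_kernel (if a = b then 0 else \<theta>) (fst z) (snd z))"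
      using Gamma_integrand_Theta_Gamma_quadrant[OF unit angle \<open>ep \<noteq> em\<close>]
      by (auto simp: fun_eq_iff indicator_def H_def)
    then show "integrable (lborel \<Otimes>\<^sub>M lborel) (\<lambda>z. indicator ?Q z * H (a * fst z, b * snd z))"
      by (simp only:) (intro integrable_half_line_kernel compactly_supported_continuous_lincomb p pt q qt)
  qed
  also have "\<dots> = (\<integral>z. indicator ?Q z * p (fst z) * q (snd z)
        * (half_line_kernel 0 (fst z) (snd z) + half_line_kernel \<theta> (fst z) (snd z))
      + indicator ?Q z * pt (fst z) * qt (snd z)
        * (half_line_kernel 0 (fst z) (snd z) - half_line_kernel \<theta> (fst z) (snd z)) \<partial>(lborel \<Otimes>\<^sub>M lborel))"
    using sum_quadrants_Gamma_integrand_Theta_Gamma[OF unit angle \<open>ep \<noteq> em\<close>]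
    by (intro Bochner_Integration.integral_cong) (auto simp: H_def indicator_def)
  also have "\<dots> = A_plus_pair \<theta> p q + A_minus_pair \<theta> pt qt"
    unfolding A_plus_pair_eq_integral A_minus_pair_eq_integral distrib_left right_diff_distrib
    by (intro Bochner_Integration.integral_add Bochner_Integration.integrable_add
        Bochner_Integration.integrable_diff integrable_half_line_kernel p pt q qt)
  finally show ?thesis .
qed

lemma cos_ne_1:
  assumes "0 < x" "x < 2 * pi"
  shows "cos x \<noteq> 1"
proof
  assume "cos x = 1"
  then obtain n :: int where n: "x = real_of_int n * 2 * pi"
    using cos_one_2pi_int by metis
  with assms have "0 < real_of_int n" "real_of_int n < 1"
    by (simp_all add: zero_less_mult_iff)
  then show False
    by simp
qed

theorem corollary1:
  fixes c :: "real^2" and chiD :: "real^2 \<Rightarrow> real"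
  assumes "C_inf chiD"
    and "\<exists>\<rho>::real \<Rightarrow> real. C_inf \<rho> \<and> bounded {r. \<rho> r \<noteq> 0} \<and> (\<forall>x. chiD x = \<rho> (norm (x - c)))"
  shows "\<exists>chi. Cc_inf_Rplus chi \<and>
    (\<forall>ep em :: real^2. \<forall>\<theta>::real.
       norm ep = 1 \<longrightarrow> norm em = 1 \<longrightarrow> ep \<bullet> em = cos (2 * \<theta>) \<longrightarrow>
       0 < 2 * \<theta> \<longrightarrow> 2 * \<theta> < 2 * pi \<longrightarrow>
       (\<forall>p pt q qt. C0_inf_Rplus p \<longrightarrow> C0_inf_Rplus pt \<longrightarrow> C0_inf_Rplus q \<longrightarrow> C0_inf_Rplus qt \<longrightarrow>
          A_Gamma_pair c ep em (\<lambda>x. chiD x * Theta_Gamma c ep em p pt x)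
                               (\<lambda>x. chiD x * Theta_Gamma c ep em q qt x)
          = A_plus_pair \<theta> (\<lambda>t. chi t * p t) (\<lambda>t. chi t * q t)
            + A_minus_pair \<theta> (\<lambda>t. chi t * pt t) (\<lambda>t. chi t * qt t)))"
proof -
  obtain \<rho> where \<rho>: "C_inf \<rho>" "bounded {r. \<rho> r \<noteq> 0}" "\<And>x. chiD x = \<rho> (norm (x - c))"
    using assms(2) by blast
  have cutoff: "compactly_supported_continuous (\<lambda>t. \<rho> t * f t)" if "C0_inf_Rplus f" for f
    using compactly_supported_continuous_mult_left[OF C_inf_continuous_on[OF \<rho>(1)]]
      C0_inf_Rplus_compactly_supported_continuous[OF that] .
  have "A_Gamma_pair c ep em (\<lambda>x. chiD x * Theta_Gamma c ep em p pt x)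
                             (\<lambda>x. chiD x * Theta_Gamma c ep em q qt x)
      = A_plus_pair \<theta> (\<lambda>t. \<rho> t * p t) (\<lambda>t. \<rho> t * q t)
        + A_minus_pair \<theta> (\<lambda>t. \<rho> t * pt t) (\<lambda>t. \<rho> t * qt t)"
    if unit: "norm ep = 1" "norm em = 1" and angle: "ep \<bullet> em = cos (2 * \<theta>)"
      and "0 < 2 * \<theta>" "2 * \<theta> < 2 * pi"
      and "C0_inf_Rplus p" "C0_inf_Rplus pt" "C0_inf_Rplus q" "C0_inf_Rplus qt"
    for ep em :: "real^2" and \<theta> p pt q qt
  proof -
    have "ep \<noteq> em"
      using that cos_ne_1[of "2 * \<theta>"] by (auto simp: norm_eq_1)
    with that show ?thesis
      unfolding \<rho>(3) mult_Theta_Gamma by (intro A_Gamma_pair_Theta_Gamma cutoff)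
  qed
  moreover have "Cc_inf_Rplus \<rho>"
    using \<rho> by (simp add: Cc_inf_Rplus_def)
  ultimately show ?thesis
    by blast
qed

end
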